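(* For $\tau,t\in\mathbb{R}$ and integer $n\ge0$ let $$\mu_{2n}(\tau,t)=\int_{-\infty}^{\infty}x^{2n}\exp(-x^6+\tau x^4+tx^2)\,dx.$$ Then $$\frac{\partial^2\mu_{2n}}{\partial\tau\,\partial t}-\tfrac23\tau\frac{\partial\mu_{2n}}{\partial\tau}-\tfrac13t\frac{\partial\mu_{2n}}{\partial t}-\tfrac16(2n+1)\mu_{2n}=0.$$ *)

theory Defs
  imports "HOL-Analysis.Analysis"
begin

definition mu :: "nat \<Rightarrow> real \<Rightarrow> real \<Rightarrow> real" where
  "mu n \<tau> t = (\<integral>x. x ^ (2 * n) * exp (- (x ^ 6) + \<tau> * x ^ 4 + t * x ^ 2) \<partial>lborel)"

end

(*
  Write w(x) = -x^6 + tau x^4 + t x^2 and mu_k for the k-th moment of exp w, for every k.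
  Differentiating under the integral sign, justified by |exp y - 1 - y| <= y^2 exp |y| and
  the Gaussian domination w(x) <= C - x^2/2, gives d mu_k / d tau = mu_(k+4) and
  d mu_k / d t = mu_(k+2). The claimed identity is then -1/6 times
  (2n+1) mu_2n + 4 tau mu_(2n+4) + 2 t mu_(2n+2) - 6 mu_(2n+6) = 0, which says that the
  derivative of x^(2n+1) exp w(x), a function vanishing at both infinities, integrates to zero.
*)

theory Submission
  imports Defs "HOL-Probability.Distributions" "HOL-Real_Asymp.Real_Asymp"
begin

lemma abs_exp_minus_one_minus_le: "\<bar>exp y - 1 - y\<bar> \<le> y\<^sup>2 * exp \<bar>y\<bar>"
  for y :: real
proof -
  obtain z where z: "\<bar>z\<bar> \<le> \<bar>y\<bar>" "exp y = (\<Sum>m<2. y ^ m / fact m) + exp z / fact 2 * y\<^sup>2"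
    using Maclaurin_exp_le[of y 2] by blast
  then have "\<bar>exp y - 1 - y\<bar> = exp z / 2 * y\<^sup>2"
    by (simp add: numeral_2_eq_2)
  also have "\<dots> \<le> exp \<bar>y\<bar> * y\<^sup>2"
  proof (rule mult_right_mono)
    have "exp z \<le> exp \<bar>y\<bar>"
      using order_trans[OF abs_ge_self z(1)] by simp
    then show "exp z / 2 \<le> exp \<bar>y\<bar>"
      using exp_gt_zero[of z] by linarith
  qed simp
  finally show ?thesis
    by (simp add: mult.commute)
qed

lemma DERIV_if_quadratic_remainder_bound:
  fixes F :: "real \<Rightarrow> real"
  assumes "\<And>h. \<bar>h\<bar> \<le> 1 \<Longrightarrow> \<bar>F (s + h) - F s - h * D\<bar> \<le> h\<^sup>2 * K"
  shows "(F has_real_derivative D) (at s)"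
proof -
  have "eventually (\<lambda>h. norm ((F (s + h) - F s) / h - D) \<le> \<bar>h\<bar> * K) (at 0)"
  proof -
    have "eventually (\<lambda>h. h \<noteq> 0 \<and> \<bar>h\<bar> < 1) (at (0::real))"
      unfolding eventually_at by (intro exI[of _ 1]) auto
    moreover have "norm ((F (s + h) - F s) / h - D) \<le> \<bar>h\<bar> * K"
      if h: "h \<noteq> 0" "\<bar>h\<bar> < 1" for h
    proof -
      have "norm ((F (s + h) - F s) / h - D) = \<bar>F (s + h) - F s - h * D\<bar> / \<bar>h\<bar>"
        using h by (simp add: field_simps)
      also have "\<dots> \<le> h\<^sup>2 * K / \<bar>h\<bar>"
        using assms[of h] h by (intro divide_right_mono) auto
      also have "\<dots> = \<bar>h\<bar> * K"
        using h by (simp add: power2_eq_square abs_mult_self field_simps)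
      finally show ?thesis .
    qed
    ultimately show ?thesis
      by (auto elim: eventually_mono)
  qed
  moreover have "((\<lambda>h. \<bar>h\<bar> * K) \<longlongrightarrow> 0) (at 0)"
    by (auto intro!: tendsto_eq_intros)
  ultimately have "((\<lambda>h. (F (s + h) - F s) / h - D) \<longlongrightarrow> 0) (at 0)"
    by (rule Lim_null_comparison)
  then show ?thesis
    by (simp add: DERIV_def LIM_zero_iff)
qed

lemma DERIV_integral_mult_exp:
  fixes g \<psi> :: "'a \<Rightarrow> real"
  assumes nonneg: "\<And>x. 0 \<le> \<psi> x"
    and int0: "\<And>s. integrable M (\<lambda>x. g x * exp (s * \<psi> x))"
    and int1: "integrable M (\<lambda>x. g x * \<psi> x * exp (s * \<psi> x))"
    and int2: "integrable M (\<lambda>x. \<bar>g x\<bar> * \<psi> x ^ 2 * exp ((s + 1) * \<psi> x))"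
  shows "((\<lambda>s. \<integral>x. g x * exp (s * \<psi> x) \<partial>M) has_real_derivative
           (\<integral>x. g x * \<psi> x * exp (s * \<psi> x) \<partial>M)) (at s)"
proof -
  let ?F = "\<lambda>s. \<integral>x. g x * exp (s * \<psi> x) \<partial>M"
  let ?D = "\<integral>x. g x * \<psi> x * exp (s * \<psi> x) \<partial>M"
  let ?K = "\<integral>x. \<bar>g x\<bar> * \<psi> x ^ 2 * exp ((s + 1) * \<psi> x) \<partial>M"
  have "\<bar>?F (s + h) - ?F s - h * ?D\<bar> \<le> h\<^sup>2 * ?K" if h: "\<bar>h\<bar> \<le> 1" for h
  proof -
    define r where "r x = g x * exp ((s + h) * \<psi> x) - g x * exp (s * \<psi> x)
      - h * (g x * \<psi> x * exp (s * \<psi> x))" for x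
    have r_le: "\<bar>r x\<bar> \<le> h\<^sup>2 * (\<bar>g x\<bar> * \<psi> x ^ 2 * exp ((s + 1) * \<psi> x))" for x
    proof -
      have "r x = g x * exp (s * \<psi> x) * (exp (h * \<psi> x) - 1 - h * \<psi> x)"
        unfolding r_def by (simp add: algebra_simps flip: exp_add)
      then have "\<bar>r x\<bar> = \<bar>g x\<bar> * exp (s * \<psi> x) * \<bar>exp (h * \<psi> x) - 1 - h * \<psi> x\<bar>"
        by (simp add: abs_mult)
      also have "\<dots> \<le> \<bar>g x\<bar> * exp (s * \<psi> x) * ((h * \<psi> x)\<^sup>2 * exp (\<psi> x))"
      proof -
        have "\<bar>h * \<psi> x\<bar> \<le> \<psi> x"
          using h nonneg[of x] by (simp add: abs_mult mult_left_le_one_le)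
        then show ?thesis
          by (intro mult_left_mono order_trans[OF abs_exp_minus_one_minus_le]) auto
      qed
      also have "\<dots> = h\<^sup>2 * (\<bar>g x\<bar> * \<psi> x ^ 2 * exp ((s + 1) * \<psi> x))"
        by (simp add: algebra_simps power_mult_distrib flip: exp_add)
      finally show ?thesis .
    qed
    have "?F (s + h) - ?F s - h * ?D = (\<integral>x. r x \<partial>M)"
      unfolding r_def using int0 int1 by simp
    also have "\<bar>\<dots>\<bar> \<le> (\<integral>x. \<bar>r x\<bar> \<partial>M)"
      using integral_norm_bound[of M r] by simp
    also have "\<dots> \<le> (\<integral>x. h\<^sup>2 * (\<bar>g x\<bar> * \<psi> x ^ 2 * exp ((s + 1) * \<psi> x)) \<partial>M)"
    proof (intro integral_mono r_le integrable_mult_right int2)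
      show "integrable M (\<lambda>x. \<bar>r x\<bar>)"
        unfolding r_def using int0 int1
        by (intro integrable_abs Bochner_Integration.integrable_diff integrable_mult_right)
    qed
    also have "\<dots> = h\<^sup>2 * ?K"
      by simp
    finally show ?thesis .
  qed
  then show ?thesis
    by (rule DERIV_if_quadratic_remainder_bound)
qed

lemma integral_derivative_eq_0_if_vanishing_at_infinity:
  fixes F f :: "real \<Rightarrow> real"
  assumes "\<And>x. (F has_real_derivative f x) (at x)" "continuous_on UNIV f"
    and "integrable lborel f" "(F \<longlongrightarrow> 0) at_bot" "(F \<longlongrightarrow> 0) at_top"
  shows "(\<integral>x. f x \<partial>lborel) = 0"
proof -
  have "(LBINT x=-\<infinity>..\<infinity>. f x) = 0 - 0"
    using assms
    by (intro interval_integral_FTC_integrable[where F = F])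
       (auto simp: has_real_derivative_iff_has_vector_derivative set_integrable_def
          continuous_on_eq_continuous_at ereal_tendsto_simps)
  then show ?thesis
    by (simp add: interval_lebesgue_integral_def set_lebesgue_integral_def)
qed

lemma cubic_bounded_above:
  fixes a b :: real
  obtains C where "\<And>y. 0 \<le> y \<Longrightarrow> a * y\<^sup>2 + b * y - y ^ 3 \<le> C"
proof -
  define R where "R = \<bar>a\<bar> + \<bar>b\<bar> + 1"
  have "a * y\<^sup>2 + b * y - y ^ 3 \<le> \<bar>a\<bar> * R\<^sup>2 + \<bar>b\<bar> * R" if "0 \<le> y" for y
  proof -
    have "a * y\<^sup>2 + b * y \<le> \<bar>a\<bar> * y\<^sup>2 + \<bar>b\<bar> * y"
      using \<open>0 \<le> y\<close> by (intro add_mono mult_right_mono) auto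
    moreover have "\<bar>a\<bar> * y\<^sup>2 + \<bar>b\<bar> * y - y ^ 3 \<le> \<bar>a\<bar> * R\<^sup>2 + \<bar>b\<bar> * R"
    proof (cases "y \<le> R")
      case True
      then have "\<bar>a\<bar> * y\<^sup>2 \<le> \<bar>a\<bar> * R\<^sup>2" "\<bar>b\<bar> * y \<le> \<bar>b\<bar> * R"
        using \<open>0 \<le> y\<close> by (auto intro: mult_left_mono power_mono)
      then show ?thesis
        using \<open>0 \<le> y\<close> by (smt (verit) zero_le_power)
    next
      case False
      then have "1 \<le> y"
        by (simp add: R_def)
      then have "y \<le> y\<^sup>2"
        using mult_left_mono[of 1 y y] by (simp add: power2_eq_square)
      then have "\<bar>b\<bar> * y \<le> \<bar>b\<bar> * y\<^sup>2"
        by (intro mult_left_mono) auto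
      moreover have "R * y\<^sup>2 \<le> y * y\<^sup>2"
        using False by (intro mult_right_mono) auto
      then have "R * y\<^sup>2 \<le> y ^ 3"
        by (simp add: power2_eq_square power3_eq_cube)
      moreover have "R * y\<^sup>2 = \<bar>a\<bar> * y\<^sup>2 + \<bar>b\<bar> * y\<^sup>2 + y\<^sup>2"
        by (simp add: R_def algebra_simps)
      moreover have "0 \<le> \<bar>a\<bar> * R\<^sup>2 + \<bar>b\<bar> * R"
        by (simp add: R_def)
      ultimately show ?thesis
        using zero_le_power2[of y] by linarith
    qed
    ultimately show ?thesis
      by linarith
  qed
  then show thesis
    by (rule that)
qed

definition sextic :: "real \<Rightarrow> real \<Rightarrow> real \<Rightarrow> real" where
  "sextic a b x = - (x ^ 6) + a * x ^ 4 + b * x ^ 2"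

lemma sextic_measurable [measurable]: "sextic a b \<in> borel_measurable borel"
  unfolding sextic_def by measurable

lemma sextic_le_gaussian_exponent:
  obtains C where "\<And>x. sextic a b x \<le> C - x\<^sup>2 / 2"
proof -
  obtain C where C: "\<And>y. 0 \<le> y \<Longrightarrow> a * y\<^sup>2 + (b + 1/2) * y - y ^ 3 \<le> C"
    using cubic_bounded_above by blast
  have "sextic a b x = a * (x\<^sup>2)\<^sup>2 + (b + 1/2) * x\<^sup>2 - (x\<^sup>2) ^ 3 - x\<^sup>2 / 2" for x
    by (simp add: sextic_def algebra_simps flip: power_mult)
  then have "sextic a b x \<le> C - x\<^sup>2 / 2" for x
    using C[of "x\<^sup>2"] by simp
  then show thesis
    by (rule that)
qed

lemma abs_power_mult_exp_sextic_le:
  obtains C where "C > 0"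
    and "\<And>x. \<bar>x\<bar> ^ k * exp (sextic a b x) \<le> C * (\<bar>x\<bar> ^ k * exp (- (x\<^sup>2) / 2))"
proof -
  obtain C where C: "\<And>x. sextic a b x \<le> C - x\<^sup>2 / 2"
    using sextic_le_gaussian_exponent by blast
  have "\<bar>x\<bar> ^ k * exp (sextic a b x) \<le> \<bar>x\<bar> ^ k * exp (C - x\<^sup>2 / 2)" for x
    using C[of x] by (intro mult_left_mono) auto
  also have "\<bar>x\<bar> ^ k * exp (C - x\<^sup>2 / 2) = exp C * (\<bar>x\<bar> ^ k * exp (- (x\<^sup>2) / 2))" for x
    by (simp add: mult.left_commute flip: exp_add)
  finally show thesis
    by (rule that[OF exp_gt_zero])
qed

lemma integrable_abs_power_mult_exp_sextic:
  "integrable lborel (\<lambda>x. \<bar>x\<bar> ^ k * exp (sextic a b x))"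
proof -
  obtain C where "C > 0"
    and C: "\<And>x. \<bar>x\<bar> ^ k * exp (sextic a b x) \<le> C * (\<bar>x\<bar> ^ k * exp (- (x\<^sup>2) / 2))"
    using abs_power_mult_exp_sextic_le[of k a b] by blast
  have "integrable lborel (\<lambda>x. C * sqrt (2 * pi) * (std_normal_density x * \<bar>x\<bar> ^ k))"
    by (intro integrable_mult_right integrable_std_normal_moment_abs)
  then have "integrable lborel (\<lambda>x. C * (\<bar>x\<bar> ^ k * exp (- (x\<^sup>2) / 2)))"
    by (simp add: std_normal_density_def ac_simps)
  then show ?thesis
  proof (rule Bochner_Integration.integrable_bound)
    show "AE x in lborel. norm (\<bar>x\<bar> ^ k * exp (sextic a b x))
        \<le> norm (C * (\<bar>x\<bar> ^ k * exp (- (x\<^sup>2) / 2)))"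
      using C \<open>C > 0\<close> by (intro AE_I2) (simp add: abs_mult)
  qed measurable
qed

lemma integrable_power_mult_exp_sextic:
  "integrable lborel (\<lambda>x. x ^ k * exp (sextic a b x))"
  using integrable_abs_power_mult_exp_sextic[of k a b]
  by (rule Bochner_Integration.integrable_bound) (auto simp: abs_mult power_abs)

lemma power_mult_exp_sextic_tendsto_0:
  shows "((\<lambda>x. x ^ k * exp (sextic a b x)) \<longlongrightarrow> 0) at_top"
    and "((\<lambda>x. x ^ k * exp (sextic a b x)) \<longlongrightarrow> 0) at_bot"
proof -
  obtain C where "\<And>x. \<bar>x\<bar> ^ k * exp (sextic a b x) \<le> C * (\<bar>x\<bar> ^ k * exp (- (x\<^sup>2) / 2))"
    using abs_power_mult_exp_sextic_le[of k a b] by blast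
  then have C: "norm (x ^ k * exp (sextic a b x)) \<le> C * (\<bar>x\<bar> ^ k * exp (- (x\<^sup>2) / 2))" for x
    by (simp add: abs_mult power_abs)
  have "((\<lambda>x. C * (\<bar>x\<bar> ^ k * exp (- (x\<^sup>2) / 2))) \<longlongrightarrow> 0) at_top"
    by (intro tendsto_mult_right_zero) real_asymp
  then show "((\<lambda>x. x ^ k * exp (sextic a b x)) \<longlongrightarrow> 0) at_top"
    by (rule Lim_null_comparison[OF always_eventually[OF allI[OF C]]])
  have "((\<lambda>x. C * (\<bar>x\<bar> ^ k * exp (- (x\<^sup>2) / 2))) \<longlongrightarrow> 0) at_bot"
    by (intro tendsto_mult_right_zero) real_asymp
  then show "((\<lambda>x. x ^ k * exp (sextic a b x)) \<longlongrightarrow> 0) at_bot"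
    by (rule Lim_null_comparison[OF always_eventually[OF allI[OF C]]])
qed

definition sextic_moment :: "nat \<Rightarrow> real \<Rightarrow> real \<Rightarrow> real" where
  "sextic_moment k a b = (\<integral>x. x ^ k * exp (sextic a b x) \<partial>lborel)"

lemma has_real_derivative_sextic_moment_quartic:
  "((\<lambda>s. sextic_moment k s b) has_real_derivative sextic_moment (k + 4) a b) (at a)"
proof -
  define g where "g x = x ^ k * exp (- (x ^ 6) + b * x\<^sup>2)" for x :: real
  have exp_sextic: "exp (sextic s b x) = exp (- (x ^ 6) + b * x\<^sup>2) * exp (s * x ^ 4)" for s x
    by (simp add: sextic_def flip: exp_add)
  have moment_k: "sextic_moment k s b = (\<integral>x. g x * exp (s * x ^ 4) \<partial>lborel)" for s
    by (simp add: sextic_moment_def g_def exp_sextic mult.assoc)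
  have moment_k4: "sextic_moment (k + 4) a b = (\<integral>x. g x * x ^ 4 * exp (a * x ^ 4) \<partial>lborel)"
    by (simp add: sextic_moment_def g_def exp_sextic power_add ac_simps)
  have "((\<lambda>s. \<integral>x. g x * exp (s * x ^ 4) \<partial>lborel) has_real_derivative
      (\<integral>x. g x * x ^ 4 * exp (a * x ^ 4) \<partial>lborel)) (at a)"
  proof (rule DERIV_integral_mult_exp)
    show "integrable lborel (\<lambda>x. g x * exp (s * x ^ 4))" for s
      using integrable_power_mult_exp_sextic[of k s b] by (simp add: g_def exp_sextic mult.assoc)
    show "integrable lborel (\<lambda>x. g x * x ^ 4 * exp (a * x ^ 4))"
      using integrable_power_mult_exp_sextic[of "k + 4" a b]
      by (simp add: g_def exp_sextic power_add ac_simps)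
    show "integrable lborel (\<lambda>x. \<bar>g x\<bar> * (x ^ 4)\<^sup>2 * exp ((a + 1) * x ^ 4))"
      using integrable_abs_power_mult_exp_sextic[of "k + 8" "a + 1" b]
      by (simp add: g_def exp_sextic power_add abs_mult power_abs ac_simps flip: power_mult)
  qed simp
  then show ?thesis
    unfolding moment_k moment_k4 .
qed

lemma has_real_derivative_sextic_moment_quadratic:
  "((\<lambda>s. sextic_moment k a s) has_real_derivative sextic_moment (k + 2) a b) (at b)"
proof -
  define g where "g x = x ^ k * exp (- (x ^ 6) + a * x ^ 4)" for x :: real
  have exp_sextic: "exp (sextic a s x) = exp (- (x ^ 6) + a * x ^ 4) * exp (s * x\<^sup>2)" for s x
    by (simp add: sextic_def flip: exp_add)
  have moment_k: "sextic_moment k a s = (\<integral>x. g x * exp (s * x\<^sup>2) \<partial>lborel)" for s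
    by (simp add: sextic_moment_def g_def exp_sextic mult.assoc)
  have moment_k2: "sextic_moment (k + 2) a b = (\<integral>x. g x * x\<^sup>2 * exp (b * x\<^sup>2) \<partial>lborel)"
    by (simp add: sextic_moment_def g_def exp_sextic power_add power2_eq_square ac_simps)
  have "((\<lambda>s. \<integral>x. g x * exp (s * x\<^sup>2) \<partial>lborel) has_real_derivative
      (\<integral>x. g x * x\<^sup>2 * exp (b * x\<^sup>2) \<partial>lborel)) (at b)"
  proof (rule DERIV_integral_mult_exp)
    show "integrable lborel (\<lambda>x. g x * exp (s * x\<^sup>2))" for s
      using integrable_power_mult_exp_sextic[of k a s] by (simp add: g_def exp_sextic mult.assoc)
    show "integrable lborel (\<lambda>x. g x * x\<^sup>2 * exp (b * x\<^sup>2))"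
      using integrable_power_mult_exp_sextic[of "k + 2" a b]
      by (simp add: g_def exp_sextic power_add power2_eq_square ac_simps)
    show "integrable lborel (\<lambda>x. \<bar>g x\<bar> * (x\<^sup>2)\<^sup>2 * exp ((b + 1) * x\<^sup>2))"
      using integrable_abs_power_mult_exp_sextic[of "k + 4" a "b + 1"]
      by (simp add: g_def exp_sextic power_add abs_mult power_abs ac_simps flip: power_mult)
  qed simp
  then show ?thesis
    unfolding moment_k moment_k2 .
qed

lemma sextic_moment_recurrence:
  "real (k + 1) * sextic_moment k a b + 4 * a * sextic_moment (k + 4) a b
    + 2 * b * sextic_moment (k + 2) a b = 6 * sextic_moment (k + 6) a b"
proof -
  define e where "e j x = x ^ j * exp (sextic a b x)" for j x
  define f where "f x = real (k + 1) * e k x + 4 * a * e (k + 4) x + 2 * b * e (k + 2) x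
    - 6 * e (k + 6) x" for x
  have e_integrable: "integrable lborel (e j)" for j
    unfolding e_def by (rule integrable_power_mult_exp_sextic)
  have "(e (k + 1) has_real_derivative f x) (at x)" for x
  proof -
    have "(sextic a b has_real_derivative - 6 * x ^ 5 + 4 * a * x ^ 3 + 2 * b * x) (at x)"
      unfolding sextic_def by (auto intro!: derivative_eq_intros)
    from DERIV_mult[OF DERIV_pow[of "k + 1"] DERIV_chain2[OF DERIV_exp this]]
    have "(e (k + 1) has_real_derivative real (k + 1) * x ^ k * exp (sextic a b x)
        + exp (sextic a b x) * (- 6 * x ^ 5 + 4 * a * x ^ 3 + 2 * b * x) * x ^ (k + 1)) (at x)"
      unfolding e_def by simp
    moreover have "real (k + 1) * x ^ k * exp (sextic a b x)
        + exp (sextic a b x) * (- 6 * x ^ 5 + 4 * a * x ^ 3 + 2 * b * x) * x ^ (k + 1) = f x"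
      unfolding f_def e_def power_add by algebra
    ultimately show ?thesis
      by simp
  qed
  moreover have "continuous_on UNIV f"
    unfolding f_def e_def sextic_def by (intro continuous_intros)
  moreover have "integrable lborel f"
    unfolding f_def using e_integrable by auto
  moreover have "(e (k + 1) \<longlongrightarrow> 0) at_bot" "(e (k + 1) \<longlongrightarrow> 0) at_top"
    using power_mult_exp_sextic_tendsto_0[of "k + 1" a b] by (simp_all add: e_def[abs_def])
  ultimately have "(\<integral>x. f x \<partial>lborel) = 0"
    by (rule integral_derivative_eq_0_if_vanishing_at_infinity)
  moreover have "sextic_moment j a b = integral\<^sup>L lborel (e j)" for j
    unfolding sextic_moment_def e_def ..
  ultimately show ?thesis
    unfolding f_def using e_integrable by simp
qed

theorem lemma5p6:
  fixes n :: nat and \<tau> t :: real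
  shows "(\<lambda>s. mu n s t) differentiable (at \<tau>)
    \<and> (\<lambda>s. mu n \<tau> s) differentiable (at t)
    \<and> (\<lambda>s. deriv (\<lambda>u. mu n s u) t) differentiable (at \<tau>)
    \<and> deriv (\<lambda>s. deriv (\<lambda>u. mu n s u) t) \<tau>
        - 2/3 * \<tau> * deriv (\<lambda>s. mu n s t) \<tau>
        - 1/3 * t * deriv (\<lambda>u. mu n \<tau> u) t
        - 1/6 * (2 * real n + 1) * mu n \<tau> t = 0"
proof -
  have mu_eq: "mu n = sextic_moment (2 * n)"
    by (simp add: fun_eq_iff mu_def sextic_moment_def sextic_def)
  have d_tau: "((\<lambda>s. mu n s t) has_real_derivative sextic_moment (2 * n + 4) \<tau> t) (at \<tau>)"
    unfolding mu_eq by (rule has_real_derivative_sextic_moment_quartic)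
  have d_t: "((\<lambda>u. mu n s u) has_real_derivative sextic_moment (2 * n + 2) s t) (at t)" for s
    unfolding mu_eq by (rule has_real_derivative_sextic_moment_quadratic)
  then have "deriv (\<lambda>u. mu n s u) t = sextic_moment (2 * n + 2) s t" for s
    by (rule DERIV_imp_deriv)
  then have d_tau_t: "((\<lambda>s. deriv (\<lambda>u. mu n s u) t) has_real_derivative
      sextic_moment (2 * n + 2 + 4) \<tau> t) (at \<tau>)"
    by (simp only: has_real_derivative_sextic_moment_quartic)
  have "deriv (\<lambda>s. deriv (\<lambda>u. mu n s u) t) \<tau>
        - 2/3 * \<tau> * deriv (\<lambda>s. mu n s t) \<tau>
        - 1/3 * t * deriv (\<lambda>u. mu n \<tau> u) t
        - 1/6 * (2 * real n + 1) * mu n \<tau> t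
      = - 1/6 * (real (2 * n + 1) * sextic_moment (2 * n) \<tau> t
          + 4 * \<tau> * sextic_moment (2 * n + 4) \<tau> t + 2 * t * sextic_moment (2 * n + 2) \<tau> t
          - 6 * sextic_moment (2 * n + 6) \<tau> t)"
    using DERIV_imp_deriv[OF d_tau] DERIV_imp_deriv[OF d_t] DERIV_imp_deriv[OF d_tau_t]
    by (simp add: mu_eq algebra_simps)
  also have "\<dots> = 0"
    using sextic_moment_recurrence[of "2 * n" \<tau> t] by simp
  finally show ?thesis
    using d_tau d_t d_tau_t real_differentiable_def by blast
qed

end
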